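(* Let $\theta=\pi/30$, let $$u=(u_1,\dots,u_8)=\Big(2\sin\theta,\ 2\sin 2\theta,\ 2\sin 3\theta,\ 2\sin 4\theta,\ 2\sin 5\theta,\ \frac{\sin 2\theta}{\sin 3\theta},\ \frac{\sin\theta}{\sin 3\theta},\ \frac{\sin\theta}{\sin 2\theta}\Big),$$ and let $M=2\sqrt3\,\dfrac{\sin 6\theta}{\sin\theta}$. Let $$P_1(x)=x^4-30x^3+240x^2-720x+720,\qquad P_2(x)=x^4-30x^3+300x^2-1080x+720 .$$ Then the roots of $P_1$ are $M u_j^2$ for $j\in\{2,5,7,8\}$ and the roots of $P_2$ are $M u_j^2$ for $j\in\{1,3,4,6\}$. Consequently the eight roots of $P=P_1P_2=x^8-60x^7+1440x^6-18000x^5+127440x^4-518400x^3+1166400x^2-1296000x+518400$ are exactly $M u_j^2$, $j=1,\dots,8$.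
   Context: In the application, $P$ is the characteristic polynomial of the mass-squared matrix $B_{ab}=\sum_{j=0}^{8} n_j\alpha_j^a\alpha_j^b$ of the $E_8$ affine Toda field theory (with $n_0=1$, $\alpha_0=-\delta$ minus the highest root, and $n_j$ the coefficients of the highest root), so the roots $M u_j^2$ are the squared masses $m_j^2$; the vector $u$ is the Perron–Frobenius eigenvector of $2I-C$ for the $E_8$ Cartan matrix $C$ (simple roots $\alpha_1,\dots,\alpha_7$ in a chain, $\alpha_8$ attached to $\alpha_5$). *)

theory Defs
  imports "HOL-Computational_Algebra.Polynomial" Complex_Main
begin

definition e8_theta :: real where "e8_theta = pi / 30"

definition e8_u :: "nat \<Rightarrow> real" where
  "e8_u j = (if j = 1 then 2 * sin e8_theta
        else if j = 2 then 2 * sin (2 * e8_theta)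
        else if j = 3 then 2 * sin (3 * e8_theta)
        else if j = 4 then 2 * sin (4 * e8_theta)
        else if j = 5 then 2 * sin (5 * e8_theta)
        else if j = 6 then sin (2 * e8_theta) / sin (3 * e8_theta)
        else if j = 7 then sin e8_theta / sin (3 * e8_theta)
        else if j = 8 then sin e8_theta / sin (2 * e8_theta)
        else 0)"

definition e8_M :: real where
  "e8_M = 2 * sqrt 3 * sin (6 * e8_theta) / sin e8_theta"

definition e8_P1 :: "real poly" where
  "e8_P1 = [:720, -720, 240, -30, 1:]"

definition e8_P2 :: "real poly" where
  "e8_P2 = [:720, -1080, 300, -30, 1:]"

definition e8_P :: "real poly" where
  "e8_P = [:518400, -1296000, 1166400, -518400, 127440, -18000, 1440, -60, 1:]"

end

theory Submission
  imports Defs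
begin

text \<open>
  Put \<open>t = 2 cos \<theta>\<close> and \<open>y = t\<^sup>2\<close>. The Chebyshev recurrences express every
  \<open>sin (k\<theta>)/sin \<theta>\<close> and \<open>2 cos (5\<theta>)\<close> as polynomials in \<open>t\<close>; since
  \<open>2 cos (5\<theta>) = \<surd>3\<close> and \<open>y > 3\<close>, the number \<open>y\<close> is a root of the quartic
  \<open>y\<^sup>4 - 7y\<^sup>3 + 14y\<^sup>2 - 8y + 1\<close>. Then \<open>M\<close> and every \<open>u\<^sub>j\<^sup>2\<close> is a rational function of
  \<open>y\<close>, each \<open>M u\<^sub>j\<^sup>2\<close> reduces to a cubic in \<open>y\<close>, and the coefficients of \<open>P\<^sub>1\<close> and \<open>P\<^sub>2\<close>
  are the elementary symmetric functions of the respective four cubics, which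
  reduce to the claimed integers modulo the quartic.
\<close>

lemma multiple_angle_polynomials:
  fixes x :: real
  defines "t \<equiv> 2 * cos x"
  shows "sin (2*x) = sin x * t"
    and "sin (3*x) = sin x * (t^2 - 1)"
    and "sin (4*x) = sin x * (t^3 - 2*t)"
    and "sin (5*x) = sin x * (t^4 - 3*t^2 + 1)"
    and "sin (6*x) = sin x * (t^5 - 4*t^3 + 3*t)"
    and "2 * cos (5*x) = t^5 - 5*t^3 + 5*t"
proof -
  have sin_step: "sin ((k + 2) * x) = t * sin ((k + 1) * x) - sin (k * x)" for k :: real
    using sin_times_cos[of "(k + 1) * x" x] by (simp add: t_def algebra_simps)
  have cos_step: "cos ((k + 2) * x) = t * cos ((k + 1) * x) - cos (k * x)" for k :: real
    using cos_times_cos[of "(k + 1) * x" x] by (simp add: t_def algebra_simps)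
  show s2: "sin (2*x) = sin x * t"
    using sin_step[of 0, simplified] by simp
  show s3: "sin (3*x) = sin x * (t^2 - 1)"
    using sin_step[of 1, simplified] unfolding s2 by (simp add: algebra_simps power2_eq_square)
  show s4: "sin (4*x) = sin x * (t^3 - 2*t)"
    using sin_step[of 2, simplified] unfolding s2 s3 by (simp add: algebra_simps eval_nat_numeral)
  show s5: "sin (5*x) = sin x * (t^4 - 3*t^2 + 1)"
    using sin_step[of 3, simplified] unfolding s3 s4 by (simp add: algebra_simps eval_nat_numeral)
  show s6: "sin (6*x) = sin x * (t^5 - 4*t^3 + 3*t)"
    using sin_step[of 4, simplified] unfolding s4 s5 by (simp add: algebra_simps eval_nat_numeral)
  have c2: "cos (2*x) = t^2/2 - 1"
    using cos_step[of 0, simplified] by (simp add: t_def power2_eq_square)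
  have c3: "cos (3*x) = t^3/2 - 3*t/2"
    using cos_step[of 1, simplified] unfolding c2 by (simp add: t_def algebra_simps eval_nat_numeral)
  have c4: "cos (4*x) = t^4/2 - 2*t^2 + 1"
    using cos_step[of 2, simplified] unfolding c2 c3 by (simp add: algebra_simps eval_nat_numeral)
  show c5: "2 * cos (5*x) = t^5 - 5*t^3 + 5*t"
    using cos_step[of 3, simplified] unfolding c3 c4 by (simp add: algebra_simps eval_nat_numeral)
qed

lemma e8_two_cos_theta:
  defines "t \<equiv> 2 * cos e8_theta"
  shows "t^5 - 5*t^3 + 5*t = sqrt 3" and "t^2 > 3"
proof -
  have "2 * cos (5 * e8_theta) = sqrt 3"
    by (simp add: e8_theta_def cos_30)
  then show "t^5 - 5*t^3 + 5*t = sqrt 3"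
    by (simp add: multiple_angle_polynomials(6) t_def)
  have "cos (pi / 6) < cos e8_theta"
    by (rule cos_monotone_0_pi) (auto simp: e8_theta_def)
  then have "sqrt 3 < t" by (simp add: t_def cos_30)
  then have "sqrt 3 ^ 2 < t^2" by (intro power_strict_mono) auto
  then show "t^2 > 3" by simp
qed

lemma e8_minimal_polynomial:
  defines "y \<equiv> (2 * cos e8_theta)^2"
  shows "y^4 - 7*y^3 + 14*y^2 - 8*y + 1 = 0"
proof -
  define t where "t = 2 * cos e8_theta"
  have "y = t^2" by (simp add: y_def t_def)
  then have "(y - 3) * (y^4 - 7*y^3 + 14*y^2 - 8*y + 1) = (t^5 - 5*t^3 + 5*t)^2 - 3"
    by (simp add: algebra_simps eval_nat_numeral)
  also have "\<dots> = 0"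
    using e8_two_cos_theta(1) by (simp add: t_def)
  finally show ?thesis
    using e8_two_cos_theta(2) by (simp add: y_def)
qed

lemma e8_M_and_u_squared:
  defines "y \<equiv> (2 * cos e8_theta)^2"
  shows "e8_M = 2*y*(y^2 - 5*y + 5)*(y^2 - 4*y + 3)"
    and "e8_u 1 ^ 2 = 4 - y"
    and "e8_u 2 ^ 2 = (4 - y) * y"
    and "e8_u 3 ^ 2 = (4 - y) * (y - 1)^2"
    and "e8_u 4 ^ 2 = (4 - y) * y * (y - 2)^2"
    and "e8_u 5 ^ 2 = (4 - y) * (y^2 - 3*y + 1)^2"
    and "e8_u 6 ^ 2 = y / (y - 1)^2"
    and "e8_u 7 ^ 2 = 1 / (y - 1)^2"
    and "e8_u 8 ^ 2 = 1 / y"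
proof -
  define t where "t = 2 * cos e8_theta"
  define s where "s = sin e8_theta"
  have y: "y = t^2" by (simp add: y_def t_def)
  have "s > 0"
    unfolding s_def e8_theta_def by (rule sin_gt_zero) auto
  have s2: "(2 * s)^2 = 4 - y"
    by (simp add: y_def s_def power_mult_distrib sin_squared_eq algebra_simps)
  note angles = multiple_angle_polynomials[of e8_theta, folded t_def s_def]
  have "e8_M = 2 * (t^5 - 5*t^3 + 5*t) * (t^5 - 4*t^3 + 3*t)"
    using \<open>s > 0\<close> e8_two_cos_theta(1)
    by (simp add: e8_M_def angles(5) s_def t_def)
  also have "\<dots> = 2*y*(y^2 - 5*y + 5)*(y^2 - 4*y + 3)"
    by (simp add: y algebra_simps eval_nat_numeral)
  finally show "e8_M = 2*y*(y^2 - 5*y + 5)*(y^2 - 4*y + 3)" .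
  have sq: "(2 * (s * p))^2 = (4 - y) * p^2" for p
    using s2 by (simp add: power_mult_distrib)
  show "e8_u 1 ^ 2 = 4 - y"
    using s2 by (simp add: e8_u_def s_def)
  show "e8_u 2 ^ 2 = (4 - y) * y"
    using sq[of t] by (simp add: e8_u_def angles y)
  show "e8_u 3 ^ 2 = (4 - y) * (y - 1)^2"
    using sq[of "t^2 - 1"] by (simp add: e8_u_def angles y)
  have "e8_u 4 ^ 2 = (4 - y) * (t^3 - 2*t)^2"
    using sq by (simp add: e8_u_def angles)
  then show "e8_u 4 ^ 2 = (4 - y) * y * (y - 2)^2"
    by (simp add: y algebra_simps eval_nat_numeral)
  have "e8_u 5 ^ 2 = (4 - y) * (t^4 - 3*t^2 + 1)^2"
    using sq by (simp add: e8_u_def angles)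
  then show "e8_u 5 ^ 2 = (4 - y) * (y^2 - 3*y + 1)^2"
    by (simp add: y flip: power_mult)
  show "e8_u 6 ^ 2 = y / (y - 1)^2"
    using \<open>s > 0\<close> by (simp add: e8_u_def angles y power_divide)
  show "e8_u 7 ^ 2 = 1 / (y - 1)^2"
    using \<open>s > 0\<close> by (simp add: e8_u_def angles y power_divide s_def)
  show "e8_u 8 ^ 2 = 1 / y"
    using \<open>s > 0\<close> by (simp add: e8_u_def angles y power_divide s_def)
qed

lemma e8_mass_squares:
  defines "y \<equiv> (2 * cos e8_theta)^2"
  shows "e8_M * e8_u 1 ^ 2 = 16 - 20*y + 12*y^2 - 2*y^3"
    and "e8_M * e8_u 2 ^ 2 = 2 + 8*y^2 - 2*y^3"
    and "e8_M * e8_u 3 ^ 2 = 14 - 34*y + 24*y^2 - 4*y^3"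
    and "e8_M * e8_u 4 ^ 2 = 6 + 10*y - 10*y^2 + 2*y^3"
    and "e8_M * e8_u 5 ^ 2 = 4 - 4*y + 2*y^2"
    and "e8_M * e8_u 6 ^ 2 = -6 + 44*y - 26*y^2 + 4*y^3"
    and "e8_M * e8_u 7 ^ 2 = -4 + 58*y - 38*y^2 + 6*y^3"
    and "e8_M * e8_u 8 ^ 2 = 28 - 54*y + 28*y^2 - 4*y^3"
proof -
  note m = e8_minimal_polynomial[folded y_def]
  note Mu = e8_M_and_u_squared[folded y_def]
  have "y \<noteq> 0" "y \<noteq> 1" using m by auto
  show "e8_M * e8_u 1 ^ 2 = 16 - 20*y + 12*y^2 - 2*y^3"
       "e8_M * e8_u 2 ^ 2 = 2 + 8*y^2 - 2*y^3"
       "e8_M * e8_u 3 ^ 2 = 14 - 34*y + 24*y^2 - 4*y^3"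
       "e8_M * e8_u 4 ^ 2 = 6 + 10*y - 10*y^2 + 2*y^3"
       "e8_M * e8_u 5 ^ 2 = 4 - 4*y + 2*y^2"
    unfolding Mu using m by algebra+
  have "e8_M * y = (-6 + 44*y - 26*y^2 + 4*y^3) * (y - 1)^2"
    unfolding Mu(1) using m by algebra
  then show "e8_M * e8_u 6 ^ 2 = -6 + 44*y - 26*y^2 + 4*y^3"
    using \<open>y \<noteq> 1\<close> by (simp add: Mu(7) field_simps)
  have "e8_M = (-4 + 58*y - 38*y^2 + 6*y^3) * (y - 1)^2"
    unfolding Mu(1) using m by algebra
  then show "e8_M * e8_u 7 ^ 2 = -4 + 58*y - 38*y^2 + 6*y^3"
    using \<open>y \<noteq> 1\<close> by (simp add: Mu(8) field_simps)
  have "e8_M = (28 - 54*y + 28*y^2 - 4*y^3) * y"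
    unfolding Mu(1) using m by algebra
  then show "e8_M * e8_u 8 ^ 2 = 28 - 54*y + 28*y^2 - 4*y^3"
    using \<open>y \<noteq> 0\<close> by (simp add: Mu(9) field_simps)
qed

lemma monic_quartic_eq_prod_linear_factors:
  fixes a b c d :: "'a::comm_ring_1"
  assumes "a*b*c*d = e0"
    and "a*b*c + a*b*d + a*c*d + b*c*d = e1"
    and "a*b + a*c + a*d + b*c + b*d + c*d = e2"
    and "a + b + c + d = e3"
  shows "[:e0, -e1, e2, -e3, 1:] = [:-a, 1:] * [:-b, 1:] * [:-c, 1:] * [:-d, 1:]"
  using assms by (auto simp: algebra_simps)

lemma e8_P1_P2_eq_prod:
  shows "e8_P1 = (\<Prod>j\<in>{2,5,7,8}. [:- (e8_M * (e8_u j)^2), 1:])"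
    and "e8_P2 = (\<Prod>j\<in>{1,3,4,6}. [:- (e8_M * (e8_u j)^2), 1:])"
proof -
  define y where "y = (2 * cos e8_theta)^2"
  define r where "r j = e8_M * e8_u j ^ 2" for j
  note m = e8_minimal_polynomial[folded y_def]
  note rs = e8_mass_squares[folded y_def]
  \<comment> \<open>The trace identity holds without reduction; \<open>algebra\<close> fails on it, \<open>simp\<close> does not.\<close>
  have "e8_P1 = [:- r 2, 1:] * [:- r 5, 1:] * [:- r 7, 1:] * [:- r 8, 1:]"
    unfolding e8_P1_def
    by (rule monic_quartic_eq_prod_linear_factors; insert m; unfold r_def rs; (algebra | simp))
  also have "\<dots> = (\<Prod>j\<in>{2,5,7,8}. [:- r j, 1:])"
    by (simp add: algebra_simps)
  finally show "e8_P1 = (\<Prod>j\<in>{2,5,7,8}. [:- (e8_M * (e8_u j)^2), 1:])"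
    unfolding r_def .
  have "e8_P2 = [:- r 1, 1:] * [:- r 3, 1:] * [:- r 4, 1:] * [:- r 6, 1:]"
    unfolding e8_P2_def
    by (rule monic_quartic_eq_prod_linear_factors; insert m; unfold r_def rs; (algebra | simp))
  also have "\<dots> = (\<Prod>j\<in>{1,3,4,6}. [:- r j, 1:])"
    by (simp add: algebra_simps)
  finally show "e8_P2 = (\<Prod>j\<in>{1,3,4,6}. [:- (e8_M * (e8_u j)^2), 1:])"
    unfolding r_def .
qed

theorem mainTheorem3:
  shows "e8_P1 = (\<Prod>j\<in>{2,5,7,8}. [:- (e8_M * (e8_u j)^2), 1:])
       \<and> e8_P2 = (\<Prod>j\<in>{1,3,4,6}. [:- (e8_M * (e8_u j)^2), 1:])
       \<and> e8_P = e8_P1 * e8_P2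
       \<and> e8_P = (\<Prod>j\<in>{1..8}. [:- (e8_M * (e8_u j)^2), 1:])
       \<and> {x. poly e8_P x = 0} = (\<lambda>j. e8_M * (e8_u j)^2) ` {1..8}"
proof -
  have P: "e8_P = e8_P1 * e8_P2"
    by (simp add: e8_P_def e8_P1_def e8_P2_def)
  have indices: "{1..8::nat} = {2,5,7,8} \<union> {1,3,4,6}" by auto
  have prod: "e8_P = (\<Prod>j\<in>{1..8}. [:- (e8_M * (e8_u j)^2), 1:])"
    unfolding P e8_P1_P2_eq_prod indices by (subst prod.union_disjoint) auto
  have "{x. poly e8_P x = 0} = (\<lambda>j. e8_M * (e8_u j)^2) ` {1..8}"
    unfolding prod by (auto simp: poly_prod)
  with P prod e8_P1_P2_eq_prod show ?thesis by blast
qed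

end
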